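(* Let $\mathcal{P}$ be a fixed hyper-prior (chosen independently of the data) and let $\delta>0$. Then with probability at least $1-\delta$ over the sampling of the training datasets $S_1,\dots,S_n$, simultaneously for all hyper-posteriors $\mathcal{Q}$ and all posteriors $Q_1,\dots,Q_n$, $$\frac1n\sum_{i=1}^n \mathcal{R}_i(Q_i)\;\le\;\frac1n\sum_{i=1}^n \widehat{\mathcal{R}}_i(Q_i)+\sqrt{\frac{\mathrm{KL}(\mathfrak{Q}\|\mathfrak{P})+\log\frac{4m_{\mathrm h}n}{\delta}+1}{2m_{\mathrm h}n}},$$ where $m_{\mathrm h}=\dfrac{n}{\sum_{i=1}^n 1/m_i}$ is the harmonic mean of the training set sizes.
   Context: Multi-task setting: there are $n$ tasks; task $i$ has an unknown data distribution $D_i$ on a sample space $\mathcal{Z}$, a loss $\ell_i:\mathcal{F}\times\mathcal{Z}\to[0,1]$ on a hypothesis set $\mathcal{F}$, and a training set $S_i=(z_{i1},\dots,z_{im_i})$ of $m_i\ge1$ i.i.d. samples from $D_i$; the datasets $S_1,\dots,S_n$ are mutually independent. $\mathcal{M}(\mathcal{F})$ denotes the set of probability distributions on $\mathcal{F}$. For $Q\in\mathcal{M}(\mathcal{F})$, $\ell_i(Q,z)=\mathbb{E}_{f\sim Q}\ell_i(f,z)$, the true risk is $\mathcal{R}_i(Q)=\mathbb{E}_{z\sim D_i}\ell_i(Q,z)$ and the empirical risk is $\widehat{\mathcal{R}}_i(Q)=\frac1{m_i}\sum_{j=1}^{m_i}\ell_i(Q,z_{ij})$. A hyper-prior $\mathcal{P}$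 and a hyper-posterior $\mathcal{Q}$ are probability distributions on $\mathcal{M}(\mathcal{F})$ (the hyper-posterior and posteriors $Q_i\in\mathcal{M}(\mathcal{F})$ may depend on the data). $\mathfrak{Q}$ is the distribution on $\mathcal{M}(\mathcal{F})\times\mathcal{F}^n$ given by the product $\mathcal{Q}\times Q_1\times\cdots\times Q_n$; $\mathfrak{P}$ is the distribution on $\mathcal{M}(\mathcal{F})\times\mathcal{F}^n$ generated by sampling $P\sim\mathcal{P}$ and then $f_1,\dots,f_n$ i.i.d. from $P$. $\mathrm{KL}$ denotes the Kullback–Leibler divergence. *)

theory Defs
  imports "HOL-Probability.Probability"
begin

text \<open>Joint distribution of all training sets: task i gets m i i.i.d. samples from D i,
  tasks independent.  A sample is S :: nat => nat => 'z, with S i j = z_ij.\<close>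
definition sample_measure :: "nat \<Rightarrow> (nat \<Rightarrow> nat) \<Rightarrow> (nat \<Rightarrow> 'z measure) \<Rightarrow> (nat \<Rightarrow> nat \<Rightarrow> 'z) measure" where
  "sample_measure n m D = PiM {..<n} (\<lambda>i. PiM {..<m i} (\<lambda>j. D i))"

definition gibbs_loss :: "('f \<Rightarrow> 'z \<Rightarrow> real) \<Rightarrow> 'f measure \<Rightarrow> 'z \<Rightarrow> real" where
  "gibbs_loss l Q z = (\<integral>f. l f z \<partial>Q)"

definition true_risk :: "'z measure \<Rightarrow> ('f \<Rightarrow> 'z \<Rightarrow> real) \<Rightarrow> 'f measure \<Rightarrow> real" where
  "true_risk D l Q = (\<integral>z. gibbs_loss l Q z \<partial>D)"

definition emp_risk :: "nat \<Rightarrow> ('f \<Rightarrow> 'z \<Rightarrow> real) \<Rightarrow> 'f measure \<Rightarrow> (nat \<Rightarrow> 'z) \<Rightarrow> real" where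
  "emp_risk mi l Q s = (\<Sum>j<mi. gibbs_loss l Q (s j)) / real mi"

definition hyper_post_joint :: "nat \<Rightarrow> 'f measure measure \<Rightarrow> (nat \<Rightarrow> 'f measure) \<Rightarrow> ('f measure \<times> (nat \<Rightarrow> 'f)) measure" where
  "hyper_post_joint n HQ Q = HQ \<Otimes>\<^sub>M PiM {..<n} Q"

definition hyper_prior_joint :: "nat \<Rightarrow> 'f measure \<Rightarrow> 'f measure measure \<Rightarrow> ('f measure \<times> (nat \<Rightarrow> 'f)) measure" where
  "hyper_prior_joint n F HP = HP \<bind> (\<lambda>P. distr (PiM {..<n} (\<lambda>_. P))
       (prob_algebra F \<Otimes>\<^sub>M PiM {..<n} (\<lambda>_. F)) (\<lambda>fs. (P, fs)))"

definition kl_div :: "'a measure \<Rightarrow> 'a measure \<Rightarrow> ereal" where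
  "kl_div N M = (if sets N = sets M \<and> absolutely_continuous M N
       \<and> integrable N (entropy_density (exp 1) M N)
     then ereal (KL_divergence (exp 1) M N) else \<infinity>)"

fun sqrt_ext :: "ereal \<Rightarrow> ereal" where
  "sqrt_ext (ereal x) = ereal (sqrt x)"
| "sqrt_ext PInfty = PInfty"
| "sqrt_ext MInfty = MInfty"

end

theory Submission
  imports Defs
begin

text \<open>For fixed predictors \<open>f\<^sub>1, \<dots>, f\<^sub>n\<close> the averaged gap
  \<open>\<Phi> = (1/n) \<Sum>\<^sub>i (R\<^sub>i(f\<^sub>i) - R\<^sub>i\<^sup>e\<^sup>m\<^sup>p(f\<^sub>i))\<close> is a sum of
  \<open>\<Sum>\<^sub>i m\<^sub>i\<close> independent terms ranging over intervals of length \<open>1/(n m\<^sub>i)\<close>, so by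
  Hoeffding's lemma \<open>E\<^sub>S exp(\<lambda>\<Phi>) \<le> exp(\<lambda>\<^sup>2/(8 m\<^sub>h n))\<close>. Integrating over the joint
  hyper-prior \<open>P\<close> and applying Markov's inequality, with probability \<open>1 - \<delta>\<close> the quantity
  \<open>\<integral> exp(\<lambda>\<Phi>) dP\<close> is small, and the Donsker-Varadhan change of measure
  \<open>\<lambda> \<integral>\<Phi> dQ \<le> KL(Q\<parallel>P) + ln \<integral> exp(\<lambda>\<Phi>) dP\<close> transfers this to all hyper-posteriors \<open>Q\<close>
  at once. Since the best \<open>\<lambda>\<close> depends on \<open>KL(Q\<parallel>P)\<close>, the union bound is taken over the grid
  \<open>\<lambda>\<^sub>k = sqrt(8 m\<^sub>h n k)\<close>, \<open>1 \<le> k \<le> \<lceil>2 m\<^sub>h n\<rceil>\<close>.\<close>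

text \<open>No measurability of the kernel \<open>N\<close> is needed. This spares proving measurability of
  \<open>P \<mapsto> P\<^sup>n\<close> inside \<open>hyper_prior_joint\<close>: the hyper-prior enters the proof only as a
  finite measure of total mass at most 1.\<close>

lemma emeasure_bind_le_emeasure_space: "emeasure (M \<bind> N) A \<le> emeasure M (space M)"
proof (cases "space M = {}")
  case True
  then show ?thesis by (cases "A = {}") (simp_all add: bind_empty emeasure_notin_sets)
next
  case False
  define K where "K = N (SOME x. x \<in> space M)"
  let ?M' = "distr M (subprob_algebra K) N"
  have bind: "M \<bind> N = join ?M'"
    unfolding K_def using False by (rule bind_nonempty)
  show ?thesis
  proof (cases "A \<in> sets K")
    case False
    then show ?thesis by (simp add: bind emeasure_notin_sets)
  next
    case A: True
    have "emeasure (M \<bind> N) A = (\<integral>\<^sup>+M'. emeasure M' A \<partial>?M')"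
      unfolding bind by (rule emeasure_join) (use A in simp_all)
    also have "\<dots> \<le> (\<integral>\<^sup>+M'. 1 \<partial>?M')"
      by (intro nn_integral_mono)
        (auto simp: space_subprob_algebra intro: subprob_space.subprob_emeasure_le_1)
    also have "\<dots> = emeasure ?M' (space ?M')"
      by simp
    also have "\<dots> \<le> emeasure M (space M)"
    proof -
      have "emeasure M (N -` space ?M' \<inter> space M) \<le> emeasure M (space M)"
        by (cases "N -` space ?M' \<inter> space M \<in> sets M")
          (auto intro!: emeasure_mono simp: emeasure_notin_sets)
      then show ?thesis
        unfolding distr_def emeasure_measure_of_conv by auto
    qed
    finally show ?thesis .
  qed
qed

lemma sets_hyper_prior_joint:
  assumes "prob_space HP"
  shows "sets (hyper_prior_joint n F HP) = sets (prob_algebra F \<Otimes>\<^sub>M PiM {..<n} (\<lambda>_. F))"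
  unfolding hyper_prior_joint_def by (rule sets_bind) (auto simp: prob_space.not_empty[OF assms])

lemma emeasure_hyper_prior_joint_le_1:
  assumes "prob_space HP"
  shows "emeasure (hyper_prior_joint n F HP) A \<le> 1"
  unfolding hyper_prior_joint_def
  by (rule order.trans[OF emeasure_bind_le_emeasure_space]) (simp add: prob_space.emeasure_space_1[OF assms])

lemma finite_measure_hyper_prior_joint:
  assumes "prob_space HP"
  shows "finite_measure (hyper_prior_joint n F HP)"
  using emeasure_hyper_prior_joint_le_1[OF assms, of n F "space (hyper_prior_joint n F HP)"]
  by (intro finite_measureI) (auto simp: top_unique)

lemma nn_integral_PiM_prod:
  assumes "finite I" and "\<And>i. i \<in> I \<Longrightarrow> sigma_finite_measure (M i)"
    and "\<And>i. i \<in> I \<Longrightarrow> f i \<in> borel_measurable (M i)"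
  shows "(\<integral>\<^sup>+x. (\<Prod>i\<in>I. f i (x i)) \<partial>PiM I M) = (\<Prod>i\<in>I. integral\<^sup>N (M i) (f i))"
proof -
  \<comment> \<open>\<open>product_nn_integral_prod\<close> wants every factor \<sigma>-finite, also outside \<open>I\<close>.\<close>
  define M' where "M' i = (if i \<in> I then M i else count_space {})" for i
  have "sigma_finite_measure (M' i)" for i
    by (cases "i \<in> I")
      (auto simp: M'_def assms(2) intro: finite_measure.sigma_finite_measure finite_measure_count_space)
  then interpret product_sigma_finite M'
    by (rule product_sigma_finite.intro)
  have "PiM I M = PiM I M'"
    by (rule PiM_cong) (auto simp: M'_def)
  moreover have "(\<integral>\<^sup>+x. (\<Prod>i\<in>I. f i (x i)) \<partial>PiM I M') = (\<Prod>i\<in>I. integral\<^sup>N (M' i) (f i))"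
    by (rule product_nn_integral_prod[OF assms(1)]) (auto simp: M'_def assms(3))
  ultimately show ?thesis
    by (simp add: M'_def)
qed

lemma Hoeffding_mgf_PiM:
  assumes "prob_space D" and [measurable]: "X \<in> borel_measurable D"
    and X_bounds: "\<And>z. z \<in> space D \<Longrightarrow> a \<le> X z \<and> X z \<le> b" and c: "0 < c"
  shows "(\<integral>\<^sup>+s. (\<Prod>j<k. ennreal (exp (c * (X (s j) - (\<integral>z. X z \<partial>D))))) \<partial>PiM {..<k} (\<lambda>_. D))
    \<le> ennreal (exp (real k * (c\<^sup>2 * (b - a)\<^sup>2 / 8)))"
proof -
  interpret interval_bounded_random_variable D X a b
    by (intro interval_bounded_random_variable.intro interval_bounded_random_variable_axioms.intro
        assms(1) AE_I2) (auto dest: X_bounds)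
  have "(\<integral>\<^sup>+s. (\<Prod>j<k. ennreal (exp (c * (X (s j) - expectation X)))) \<partial>PiM {..<k} (\<lambda>_. D))
      = (\<Prod>j<k. \<integral>\<^sup>+z. ennreal (exp (c * (X z - expectation X))) \<partial>D)"
    by (rule nn_integral_PiM_prod) (simp_all add: sigma_finite_measure_axioms)
  also have "\<dots> \<le> (\<Prod>j<k. ennreal (exp (c\<^sup>2 * (b - a)\<^sup>2 / 8)))"
    by (intro prod_mono_ennreal Hoeffdings_lemma_nn_integral c)
  also have "\<dots> = ennreal (exp (real k * (c\<^sup>2 * (b - a)\<^sup>2 / 8)))"
    by (simp add: exp_of_nat_mult[symmetric] ennreal_power)
  finally show ?thesis .
qed

lemma (in prob_space) integral_in_unit_interval:
  fixes f :: "'a \<Rightarrow> real"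
  assumes "\<And>x. 0 \<le> f x" and "\<And>x. f x \<le> 1"
  shows "0 \<le> (\<integral>x. f x \<partial>M) \<and> (\<integral>x. f x \<partial>M) \<le> 1"
proof (cases "integrable M f")
  case True
  have "0 \<le> (\<integral>x. f x \<partial>M)"
    by (intro integral_nonneg_AE) (simp add: assms)
  moreover have "(\<integral>x. f x \<partial>M) \<le> 1"
    by (intro integral_le_const True AE_I2 assms)
  ultimately show ?thesis ..
qed (simp add: not_integrable_integral_eq)

lemma
  fixes f :: "'a \<Rightarrow> real"
  assumes M1: "prob_space M1" and M: "\<And>i. i \<in> I \<Longrightarrow> prob_space (M i)" and i: "i \<in> I"
    and f_meas: "f \<in> borel_measurable (M i)" and f_bound: "\<And>x. \<bar>f x\<bar> \<le> B"
  shows integrable_pair_PiM_component: "integrable (M1 \<Otimes>\<^sub>M PiM I M) (\<lambda>x. f (snd x i))"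
    and integral_pair_PiM_component: "(\<integral>x. f (snd x i) \<partial>(M1 \<Otimes>\<^sub>M PiM I M)) = (\<integral>y. f y \<partial>M i)"
proof -
  interpret PiM: prob_space "PiM I M"
    using M by (intro prob_space_PiM) auto
  interpret M1: prob_space M1 by (fact M1)
  interpret pair_sigma_finite M1 "PiM I M" ..
  interpret pair: prob_space "M1 \<Otimes>\<^sub>M PiM I M"
    by (intro prob_space_pair M1 PiM.prob_space_axioms)
  have comp_meas: "(\<lambda>y. y i) \<in> measurable (PiM I M) (M i)"
    using i by simp
  have [measurable]: "(\<lambda>y. f (y i)) \<in> borel_measurable (PiM I M)"
    by (rule measurable_compose[OF comp_meas f_meas])
  show int: "integrable (M1 \<Otimes>\<^sub>M PiM I M) (\<lambda>x. f (snd x i))"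
    by (rule pair.integrable_const_bound[where B=B]) (simp add: f_bound, measurable)
  have "(\<integral>y. f (y i) \<partial>PiM I M) = (\<integral>y. f y \<partial>distr (PiM I M) (M i) (\<lambda>y. y i))"
    by (rule integral_distr[OF comp_meas f_meas, symmetric])
  also have "\<dots> = (\<integral>y. f y \<partial>M i)"
    using distr_PiM_component[of I M i] M i by simp
  finally have "(\<integral>y. f (y i) \<partial>PiM I M) = (\<integral>y. f y \<partial>M i)" .
  then show "(\<integral>x. f (snd x i) \<partial>(M1 \<Otimes>\<^sub>M PiM I M)) = (\<integral>y. f y \<partial>M i)"
    using integral_fst'[OF int] by (simp add: M1.prob_space)
qed

lemma (in sigma_finite_measure) AE_RN_deriv_pos:
  assumes sN: "sets N = sets M" and ac: "absolutely_continuous M N" and "finite_measure N"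
  shows "AE x in N. 0 < enn2real (RN_deriv M N x)"
proof -
  have N: "density M (RN_deriv M N) = N"
    using density_RN_deriv[OF ac sN] .
  have "(\<integral>\<^sup>+x. RN_deriv M N x \<partial>M) = emeasure N (space N)"
    using sets_eq_imp_space_eq[OF sN] by (subst (2) N[symmetric]) (simp add: emeasure_density)
  then have "AE x in M. RN_deriv M N x \<noteq> \<infinity>"
    using finite_measure.emeasure_finite[OF assms(3)] by (intro nn_integral_PInf_AE) auto
  then have "AE x in N. RN_deriv M N x \<noteq> \<infinity>"
    using absolutely_continuous_AE[OF sN ac] by blast
  moreover have "AE x in N. RN_deriv M N x \<noteq> 0"
    by (subst N[symmetric]) (subst AE_density, auto)
  ultimately show ?thesis
    by eventually_elim
      (auto simp: enn2real_positive_iff top.not_eq_extremum zero_less_iff_neq_zero)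
qed

lemma nn_integral_density_divide_le:
  fixes f :: "'a \<Rightarrow> real"
  assumes [measurable]: "p \<in> borel_measurable M" "f \<in> borel_measurable M"
    and f_nonneg: "\<And>x. 0 \<le> f x"
  shows "(\<integral>\<^sup>+x. ennreal (f x / enn2real (p x)) \<partial>density M p) \<le> (\<integral>\<^sup>+x. ennreal (f x) \<partial>M)"
proof -
  have "p x * ennreal (f x / enn2real (p x)) \<le> ennreal (f x)" for x
  proof (cases "p x")
    case (real r)
    then show ?thesis
      using f_nonneg[of x] by (cases "r = 0") (simp_all flip: ennreal_mult)
  qed simp
  then show ?thesis
    by (subst nn_integral_density) (auto intro: nn_integral_mono)
qed

lemma (in finite_measure) integral_exp_pos:
  fixes g :: "'a \<Rightarrow> real"
  assumes "emeasure M (space M) \<noteq> 0" and [measurable]: "g \<in> borel_measurable M"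
    and g_le: "\<And>x. x \<in> space M \<Longrightarrow> g x \<le> B"
  shows "0 < (\<integral>x. exp (g x) \<partial>M)"
proof -
  have int: "integrable M (\<lambda>x. exp (g x))"
    by (rule integrable_const_bound[where B="exp B"]) (use g_le in auto)
  have "\<not> (AE x in M. False)"
    using assms(1) by (simp add: eventually_False ae_filter_eq_bot_iff)
  then have "(\<integral>x. exp (g x) \<partial>M) \<noteq> 0"
    by (subst integral_nonneg_eq_0_iff_AE[OF int]) auto
  moreover have "0 \<le> (\<integral>x. exp (g x) \<partial>M)"
    by (intro integral_nonneg_AE) auto
  ultimately show ?thesis
    by linarith
qed

lemma (in sigma_finite_measure) integral_divide_RN_deriv_le:
  fixes f :: "'a \<Rightarrow> real"
  assumes sN: "sets N = sets M" and ac: "absolutely_continuous M N"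
    and [measurable]: "f \<in> borel_measurable M" and f_nonneg: "\<And>x. 0 \<le> f x"
    and int_f: "integrable M f"
  shows "integrable N (\<lambda>x. f x / enn2real (RN_deriv M N x))"
    and "(\<integral>x. f x / enn2real (RN_deriv M N x) \<partial>N) \<le> (\<integral>x. f x \<partial>M)"
proof -
  let ?h = "\<lambda>x. f x / enn2real (RN_deriv M N x)"
  have h_nonneg: "0 \<le> ?h x" for x
    using f_nonneg[of x] by simp
  have [measurable]: "?h \<in> borel_measurable N"
    unfolding measurable_cong_sets[OF sN refl] by measurable
  have "(\<integral>\<^sup>+x. ennreal (?h x) \<partial>N) \<le> (\<integral>\<^sup>+x. ennreal (f x) \<partial>M)"
    by (subst (1) density_RN_deriv[OF ac sN, symmetric])
      (intro nn_integral_density_divide_le, use f_nonneg in auto)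
  also have "\<dots> = ennreal (\<integral>x. f x \<partial>M)"
    using int_f f_nonneg by (intro nn_integral_eq_integral) auto
  finally have h_le: "(\<integral>\<^sup>+x. ennreal (?h x) \<partial>N) \<le> ennreal (\<integral>x. f x \<partial>M)" .
  then show int_h: "integrable N ?h"
    using h_nonneg by (intro integrableI_nonneg) (auto simp: top.not_eq_extremum intro: le_less_trans)
  show "(\<integral>x. ?h x \<partial>N) \<le> (\<integral>x. f x \<partial>M)"
    using h_le h_nonneg integral_nonneg_AE[of f M] f_nonneg
    by (simp add: integral_eq_nn_integral enn2real_leI)
qed

text \<open>Gibbs' inequality \<open>ln h \<le> h - 1\<close> for \<open>h = exp g / (Z \<cdot> dN/dM)\<close>, whose
  \<open>N\<close>-integral is at most \<open>1\<close>.\<close>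

lemma (in finite_measure) Donsker_Varadhan:
  fixes g :: "'a \<Rightarrow> real"
  assumes sN: "sets N = sets M" and ac: "absolutely_continuous M N" and "prob_space N"
    and int_KL: "integrable N (entropy_density (exp 1) M N)"
    and [measurable]: "g \<in> borel_measurable M" and g_bound: "\<And>x. x \<in> space M \<Longrightarrow> \<bar>g x\<bar> \<le> B"
    and exp_g_le: "(\<integral>x. exp (g x) \<partial>M) \<le> C"
  shows "(\<integral>x. g x \<partial>N) \<le> KL_divergence (exp 1) M N + ln C"
proof -
  interpret N: prob_space N by fact
  define p where "p x = enn2real (RN_deriv M N x)" for x
  define Z where "Z = (\<integral>x. exp (g x) \<partial>M)"
  define h where "h x = exp (g x) / Z / p x" for x
  have spN: "space N = space M"
    using sets_eq_imp_space_eq[OF sN] .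
  have [measurable]: "g \<in> borel_measurable N" "p \<in> borel_measurable N"
    unfolding p_def measurable_cong_sets[OF sN refl] by simp_all
  have "emeasure M (space M) \<noteq> 0"
    using ac N.emeasure_space_1 spN sN unfolding absolutely_continuous_def null_sets_def by auto
  then have Z_pos: "0 < Z"
    unfolding Z_def using g_bound by (intro integral_exp_pos[where B=B]) (auto simp: abs_le_iff)
  have int_exp_g: "integrable M (\<lambda>x. exp (g x))"
    by (rule integrable_const_bound[where B="exp B"]) (use g_bound in \<open>auto simp: abs_le_iff\<close>)
  have int_g: "integrable N g"
    by (rule N.integrable_const_bound[where B=B]) (use g_bound spN in auto)
  have ed: "entropy_density (exp 1) M N = (\<lambda>x. ln (p x))"
    unfolding entropy_density_def p_def by (auto simp: log_ln[symmetric] o_def)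
  have "integrable N h" and "(\<integral>x. h x \<partial>N) \<le> (\<integral>x. exp (g x) / Z \<partial>M)"
    unfolding h_def p_def using int_exp_g Z_pos
    by (intro integral_divide_RN_deriv_le[OF sN ac]; simp)+
  moreover have "(\<integral>x. exp (g x) / Z \<partial>M) = 1"
    using Z_pos by (simp add: Z_def)
  ultimately have int_h: "integrable N h" and h_le: "(\<integral>x. h x \<partial>N) \<le> 1"
    by simp_all
  have "(\<integral>x. g x \<partial>N) - KL_divergence (exp 1) M N - ln Z = (\<integral>x. g x - ln (p x) - ln Z \<partial>N)"
    using int_g int_KL by (simp add: KL_divergence_def ed N.prob_space)
  also have "\<dots> \<le> (\<integral>x. h x - 1 \<partial>N)"
  proof (rule integral_mono_AE)
    show "AE x in N. g x - ln (p x) - ln Z \<le> h x - 1"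
      using AE_RN_deriv_pos[OF sN ac N.finite_measure_axioms] unfolding p_def[symmetric]
    proof eventually_elim
      case (elim x)
      have "g x - ln (p x) - ln Z = ln (h x)"
        using elim Z_pos by (simp add: h_def p_def ln_div ln_mult)
      also have "\<dots> \<le> h x - 1"
        using elim Z_pos by (intro ln_le_minus_one) (simp add: h_def p_def)
      finally show ?case .
    qed
  qed (use int_g int_KL int_h in \<open>simp_all add: ed\<close>)
  also have "\<dots> \<le> 0"
    using int_h h_le by (simp add: N.prob_space)
  finally have "(\<integral>x. g x \<partial>N) \<le> KL_divergence (exp 1) M N + ln Z"
    by simp
  moreover have "ln Z \<le> ln C"
    using Z_pos exp_g_le by (simp add: Z_def)
  ultimately show ?thesis
    by linarith
qed

lemma le_sqrt_of_grid_point: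
  fixes N t k d :: real
  assumes N: "0 < N" and k: "1 \<le> k" "t \<le> k" "k < t + 1"
    and bound: "sqrt (8 * N * k) * d \<le> t + k"
  shows "d \<le> sqrt ((t + 1) / (2 * N))"
proof (cases "d \<le> 0")
  case True
  have "0 \<le> (t + 1) / (2 * N)"
    using N k by simp
  then show ?thesis
    using True real_sqrt_ge_zero by (meson order_trans)
next
  case False
  have "8 * N * k * d\<^sup>2 = (sqrt (8 * N * k) * d)\<^sup>2"
    using N k by (simp add: power_mult_distrib)
  also have "\<dots> \<le> (t + k)\<^sup>2"
    using bound False N k by (intro power_mono) auto
  also have "\<dots> = (k - t)\<^sup>2 + 4 * k * t"
    by (simp add: power2_eq_square algebra_simps)
  also have "\<dots> \<le> 4 * k * (t + 1)"
    using k power_le_one[of "k - t" 2] by (simp add: algebra_simps)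
  finally have "k * (2 * N * d\<^sup>2) \<le> k * (t + 1)"
    by (simp add: algebra_simps)
  then have "2 * N * d\<^sup>2 \<le> t + 1"
    using k(1) by (subst (asm) mult_le_cancel_left_pos) auto
  then have "d\<^sup>2 \<le> (t + 1) / (2 * N)"
    using N by (simp add: field_simps)
  then show ?thesis
    by (rule real_le_rsqrt)
qed

text \<open>The grid point used is \<open>k = \<lceil>K + ln (r/\<delta>)\<rceil>\<close> with \<open>r = \<lceil>2N\<rceil>\<close>; it lies on the
  grid unless the claimed bound exceeds \<open>1\<close> anyway.\<close>

lemma le_sqrt_of_grid_bounds:
  fixes N \<delta> K d :: real
  assumes N: "1 \<le> N" and \<delta>: "0 < \<delta>" "\<delta> < 1" and K: "0 \<le> K" and d: "d \<le> 1"
    and grid: "\<And>k. 1 \<le> k \<Longrightarrow> k \<le> nat \<lceil>2 * N\<rceil> \<Longrightarrow>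
      sqrt (8 * N * real k) * d \<le> K + real k + ln (real (nat \<lceil>2 * N\<rceil>) / \<delta>)"
  shows "d \<le> sqrt ((K + ln (4 * N / \<delta>) + 1) / (2 * N))"
proof (cases "2 * N \<le> K + ln (4 * N / \<delta>) + 1")
  case True
  then have "1 \<le> sqrt ((K + ln (4 * N / \<delta>) + 1) / (2 * N))"
    using N by simp
  then show ?thesis
    using d by linarith
next
  case False
  define r where "r = nat \<lceil>2 * N\<rceil>"
  define t where "t = K + ln (real r / \<delta>)"
  define k where "k = nat \<lceil>t\<rceil>"
  have r: "2 * N \<le> real r" "real r \<le> 4 * N"
  proof -
    have "real r = of_int \<lceil>2 * N\<rceil>"
      unfolding r_def using N by simp
    then show "2 * N \<le> real r" "real r \<le> 4 * N"
      using N le_of_int_ceiling[of "2 * N"] of_int_ceiling_le_add_one[of "2 * N"] by linarith+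
  qed
  have "1 < real r / \<delta>"
    using r N \<delta> by (simp add: field_simps)
  then have t_pos: "0 < t"
    unfolding t_def using K ln_gt_zero[of "real r / \<delta>"] by linarith
  have t_le: "t + 1 \<le> K + ln (4 * N / \<delta>) + 1"
    unfolding t_def using r N \<delta> by (simp add: divide_right_mono)
  have "real k = of_int \<lceil>t\<rceil>" "1 \<le> \<lceil>t\<rceil>"
    unfolding k_def using t_pos by simp_all
  then have k: "1 \<le> k" "t \<le> real k" "real k < t + 1"
    using ceiling_correct[of t] by linarith+
  have "k \<le> r"
    using k t_le False r by linarith
  then have "sqrt (8 * N * real k) * d \<le> t + real k"
    using grid[OF k(1)] by (simp add: t_def r_def)
  then have "d \<le> sqrt ((t + 1) / (2 * N))"
    using N k by (intro le_sqrt_of_grid_point) auto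
  also have "\<dots> \<le> sqrt ((K + ln (4 * N / \<delta>) + 1) / (2 * N))"
    using t_le N by (simp add: divide_right_mono)
  finally show ?thesis .
qed

lemma (in finite_measure) PAC_Bayes_grid_bound:
  fixes g :: "'a \<Rightarrow> real" and N \<delta> :: real
  assumes N: "1 \<le> N" and \<delta>: "0 < \<delta>" "\<delta> < 1" and M_le_1: "emeasure M (space M) \<le> 1"
    and sQ: "sets Q = sets M" and ac: "absolutely_continuous M Q" and Q: "prob_space Q"
    and int_KL: "integrable Q (entropy_density (exp 1) M Q)"
    and [measurable]: "g \<in> borel_measurable M" and g_bound: "\<And>x. x \<in> space M \<Longrightarrow> \<bar>g x\<bar> \<le> 1"
    and grid: "\<And>k. 1 \<le> k \<Longrightarrow> k \<le> nat \<lceil>2 * N\<rceil> \<Longrightarrow>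
      (\<integral>\<^sup>+x. ennreal (exp (sqrt (8 * N * real k) * g x)) \<partial>M)
        \<le> ennreal (exp (real k) * real (nat \<lceil>2 * N\<rceil>) / \<delta>)"
  shows "(\<integral>x. g x \<partial>Q) \<le> sqrt ((KL_divergence (exp 1) M Q + ln (4 * N / \<delta>) + 1) / (2 * N))"
proof (rule le_sqrt_of_grid_bounds[OF N \<delta>])
  interpret Q: prob_space Q by (fact Q)
  let ?r = "real (nat \<lceil>2 * N\<rceil>)"
  have "(\<integral>x. exp (0::real) \<partial>M) \<le> 1"
    using M_le_1 by (simp add: emeasure_eq_measure)
  then show "0 \<le> KL_divergence (exp 1) M Q"
    using Donsker_Varadhan[OF sQ ac Q int_KL, where g="\<lambda>_. 0" and B=0 and C=1] by simp
  have "integrable Q g"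
    using g_bound sets_eq_imp_space_eq[OF sQ]
    by (intro Q.integrable_const_bound[where B=1]) (auto simp: measurable_cong_sets[OF sQ refl])
  then show "(\<integral>x. g x \<partial>Q) \<le> 1"
    using g_bound sets_eq_imp_space_eq[OF sQ] by (intro Q.integral_le_const) (auto simp: abs_le_iff)
  fix k :: nat
  assume k: "1 \<le> k" "k \<le> nat \<lceil>2 * N\<rceil>"
  define lam where "lam = sqrt (8 * N * real k)"
  have lam_nonneg: "0 \<le> lam"
    unfolding lam_def using N by simp
  have "(\<integral>x. exp (lam * g x) \<partial>M) = enn2real (\<integral>\<^sup>+x. ennreal (exp (lam * g x)) \<partial>M)"
    by (intro integral_eq_nn_integral) auto
  also have "\<dots> \<le> exp (real k) * ?r / \<delta>"
    using grid[OF k] \<delta> by (intro enn2real_leI) (simp_all add: lam_def)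
  finally have "(\<integral>x. lam * g x \<partial>Q) \<le> KL_divergence (exp 1) M Q + ln (exp (real k) * ?r / \<delta>)"
    using g_bound lam_nonneg
    by (intro Donsker_Varadhan[OF sQ ac Q int_KL, where B=lam]) (auto simp: abs_mult mult_left_le)
  moreover have "ln (exp (real k) * ?r / \<delta>) = real k + ln (?r / \<delta>)"
  proof -
    have "exp (real k) * ?r / \<delta> = exp (real k + ln (?r / \<delta>))"
      using N \<delta> by (simp add: exp_add)
    then show ?thesis
      by simp
  qed
  ultimately show "sqrt (8 * N * real k) * (\<integral>x. g x \<partial>Q)
      \<le> KL_divergence (exp 1) M Q + real k + ln (?r / \<delta>)"
    by (simp add: lam_def)
qed

lemma (in prob_space) prob_nn_integral_exp_gt_le:
  fixes g :: "'a \<Rightarrow> 'b \<Rightarrow> real"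
  assumes "finite_measure P" and P_le_1: "emeasure P (space P) \<le> 1"
    and g_meas: "(\<lambda>(\<omega>, x). g \<omega> x) \<in> borel_measurable (M \<Otimes>\<^sub>M P)"
    and mgf: "\<And>x. x \<in> space P \<Longrightarrow> (\<integral>\<^sup>+\<omega>. ennreal (exp (g \<omega> x)) \<partial>M) \<le> ennreal C"
    and C: "0 < C" and \<eta>: "0 < \<eta>"
  shows "{\<omega> \<in> space M. ennreal (C / \<eta>) < (\<integral>\<^sup>+x. ennreal (exp (g \<omega> x)) \<partial>P)} \<in> events"
    and "prob {\<omega> \<in> space M. ennreal (C / \<eta>) < (\<integral>\<^sup>+x. ennreal (exp (g \<omega> x)) \<partial>P)} \<le> \<eta>"
proof -
  interpret prior: finite_measure P by fact
  interpret pair_sigma_finite M P ..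
  define \<Lambda> where "\<Lambda> \<omega> = (\<integral>\<^sup>+x. ennreal (exp (g \<omega> x)) \<partial>P)" for \<omega>
  have [measurable]: "(\<lambda>p. g (fst p) (snd p)) \<in> borel_measurable (M \<Otimes>\<^sub>M P)"
    using g_meas by (simp add: case_prod_beta')
  then have exp_g_meas: "(\<lambda>p. ennreal (exp (g (fst p) (snd p)))) \<in> borel_measurable (M \<Otimes>\<^sub>M P)"
    by measurable
  have [measurable]: "\<Lambda> \<in> borel_measurable M"
    unfolding \<Lambda>_def using prior.borel_measurable_nn_integral_fst[OF exp_g_meas] by simp
  then show "{\<omega> \<in> space M. ennreal (C / \<eta>) < \<Lambda> \<omega>} \<in> events"
    by measurable
  have "(\<integral>\<^sup>+\<omega>. \<Lambda> \<omega> \<partial>M) = (\<integral>\<^sup>+x. (\<integral>\<^sup>+\<omega>. ennreal (exp (g \<omega> x)) \<partial>M) \<partial>P)"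
    unfolding \<Lambda>_def using Fubini'[of "\<lambda>\<omega> x. ennreal (exp (g \<omega> x))"] exp_g_meas by (simp add: case_prod_beta')
  also have "\<dots> \<le> (\<integral>\<^sup>+x. ennreal C \<partial>P)"
    by (intro nn_integral_mono mgf)
  also have "\<dots> \<le> ennreal C"
    using P_le_1 mult_left_mono[OF P_le_1, of "ennreal C"] by simp
  finally have \<Lambda>_le: "(\<integral>\<^sup>+\<omega>. \<Lambda> \<omega> \<partial>M) \<le> ennreal C" .
  have "{\<omega> \<in> space M. ennreal (C / \<eta>) < \<Lambda> \<omega>} \<subseteq> {\<omega> \<in> space M. 1 \<le> ennreal (\<eta> / C) * \<Lambda> \<omega>}"
  proof safe
    fix \<omega> assume "ennreal (C / \<eta>) < \<Lambda> \<omega>"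
    then have "ennreal (\<eta> / C) * ennreal (C / \<eta>) \<le> ennreal (\<eta> / C) * \<Lambda> \<omega>"
      by (intro mult_left_mono) auto
    then show "1 \<le> ennreal (\<eta> / C) * \<Lambda> \<omega>"
      using C \<eta> by (simp flip: ennreal_mult)
  qed
  then have "emeasure M {\<omega> \<in> space M. ennreal (C / \<eta>) < \<Lambda> \<omega>}
      \<le> emeasure M {\<omega> \<in> space M. 1 \<le> ennreal (\<eta> / C) * \<Lambda> \<omega>}"
    by (intro emeasure_mono) measurable
  also have "\<dots> \<le> ennreal (\<eta> / C) * (\<integral>\<^sup>+\<omega>. \<Lambda> \<omega> * indicator (space M) \<omega> \<partial>M)"
    by (rule nn_integral_Markov_inequality) simp_all
  also have "\<dots> = ennreal (\<eta> / C) * (\<integral>\<^sup>+\<omega>. \<Lambda> \<omega> \<partial>M)"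
    by (intro arg_cong[where f="(*) _"] nn_integral_cong) simp
  also have "\<dots> \<le> ennreal (\<eta> / C) * ennreal C"
    using \<Lambda>_le by (rule mult_left_mono) simp
  also have "\<dots> = ennreal \<eta>"
    using C \<eta> by (simp flip: ennreal_mult)
  finally show "prob {\<omega> \<in> space M. ennreal (C / \<eta>) < \<Lambda> \<omega>} \<le> \<eta>"
    using \<eta> by (simp add: emeasure_eq_measure)
qed

lemma (in prob_space) prob_Diff_UN_ge:
  assumes "finite K" and "\<And>k. k \<in> K \<Longrightarrow> B k \<in> events"
  shows "1 - (\<Sum>k\<in>K. prob (B k)) \<le> prob (space M - (\<Union>k\<in>K. B k))"
proof -
  have "prob (\<Union>k\<in>K. B k) \<le> (\<Sum>k\<in>K. prob (B k))"
    using assms by (intro finite_measure_subadditive_finite) auto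
  moreover have "(\<Union>k\<in>K. B k) \<in> events"
    using assms by auto
  ultimately show ?thesis
    by (simp add: prob_compl)
qed

locale multitask_learning =
  fixes n :: nat and m :: "nat \<Rightarrow> nat" and F :: "'f measure" and Z :: "'z measure"
    and D :: "nat \<Rightarrow> 'z measure" and l :: "nat \<Rightarrow> 'f \<Rightarrow> 'z \<Rightarrow> real"
  assumes n_pos: "0 < n"
    and m_pos: "\<And>i. i < n \<Longrightarrow> 1 \<le> m i"
    and prob_space_D: "\<And>i. i < n \<Longrightarrow> prob_space (D i)"
    and sets_D: "\<And>i. i < n \<Longrightarrow> sets (D i) = sets Z"
    and measurable_l: "\<And>i. i < n \<Longrightarrow> (\<lambda>(f, z). l i f z) \<in> borel_measurable (F \<Otimes>\<^sub>M Z)"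
    and l_nonneg: "\<And>i f z. i < n \<Longrightarrow> 0 \<le> l i f z"
    and l_le_1: "\<And>i f z. i < n \<Longrightarrow> l i f z \<le> 1"
begin

abbreviation samples :: "(nat \<Rightarrow> nat \<Rightarrow> 'z) measure" where
  "samples \<equiv> sample_measure n m D"

definition harmonic_m :: real where
  "harmonic_m = real n / (\<Sum>i<n. 1 / real (m i))"

text \<open>For fixed predictors this is \<open>(1/n) \<Sum>\<^sub>i (R\<^sub>i(f\<^sub>i) - R\<^sub>i\<^sup>e\<^sup>m\<^sup>p(f\<^sub>i))\<close>, written as
  one double sum so that its exponential factorises over the samples.\<close>

definition risk_gap :: "(nat \<Rightarrow> 'f) \<Rightarrow> (nat \<Rightarrow> nat \<Rightarrow> 'z) \<Rightarrow> real" where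
  "risk_gap fs S =
    (\<Sum>i<n. \<Sum>j<m i. ((\<integral>z. l i (fs i) z \<partial>D i) - l i (fs i) (S i j)) / (real n * real (m i)))"

lemma prob_space_samples: "prob_space samples"
  unfolding sample_measure_def using prob_space_D by (intro prob_space_PiM) simp

lemma sample_in_space: "S \<in> space samples \<Longrightarrow> i < n \<Longrightarrow> j < m i \<Longrightarrow> S i j \<in> space Z"
  using sets_eq_imp_space_eq[OF sets_D] by (auto simp: sample_measure_def space_PiM)

lemma sum_inverse_m_pos: "0 < (\<Sum>i<n. 1 / real (m i))"
  using n_pos m_pos by (intro sum_pos) (auto simp: Suc_le_eq)

lemma one_le_harmonic_m: "1 \<le> harmonic_m"
proof -
  have "(\<Sum>i<n. 1 / real (m i)) \<le> (\<Sum>i<n. 1)"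
  proof (intro sum_mono)
    fix i assume "i \<in> {..<n}"
    then have "1 \<le> real (m i)"
      using m_pos by simp
    then show "1 / real (m i) \<le> 1"
      by simp
  qed
  then show ?thesis
    unfolding harmonic_m_def using sum_inverse_m_pos by simp
qed

lemma one_le_harmonic_m_n: "1 \<le> harmonic_m * real n"
proof -
  have "1 \<le> real n"
    using n_pos by simp
  then show ?thesis
    using one_le_harmonic_m mult_mono[OF one_le_harmonic_m] by simp
qed

lemma measurable_loss_pair:
  assumes "i < n" and "sets Q = sets F"
  shows "case_prod (l i) \<in> borel_measurable (Q \<Otimes>\<^sub>M D i)"
  using measurable_l[OF assms(1)]
  by (simp add: measurable_cong_sets[OF sets_pair_measure_cong[OF assms(2) sets_D[OF assms(1)]] refl]
      case_prod_eta)

lemma measurable_loss_sample: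
  assumes "i < n" and "f \<in> space F"
  shows "l i f \<in> borel_measurable (D i)"
  using measurable_Pair2[OF measurable_loss_pair[OF assms(1) refl] assms(2)] by simp

lemma measurable_loss_predictor:
  assumes "i < n" and "sets Q = sets F" and "z \<in> space Z"
  shows "(\<lambda>f. l i f z) \<in> borel_measurable Q"
  using measurable_Pair1[OF measurable_l[OF assms(1)] assms(3)]
  by (simp add: measurable_cong_sets[OF assms(2) refl])

lemma expected_loss_in_unit_interval:
  "i < n \<Longrightarrow> 0 \<le> (\<integral>z. l i f z \<partial>D i) \<and> (\<integral>z. l i f z \<partial>D i) \<le> 1"
  using prob_space_D l_nonneg l_le_1 by (intro prob_space.integral_in_unit_interval) simp_all

lemma abs_risk_gap_le_1: "\<bar>risk_gap fs S\<bar> \<le> 1"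
proof -
  have term_le: "\<bar>(\<integral>z. l i (fs i) z \<partial>D i) - l i (fs i) (S i j)\<bar> / (real n * real (m i))
      \<le> 1 / (real n * real (m i))" if "i < n" for i j
  proof -
    have "0 \<le> (\<integral>z. l i (fs i) z \<partial>D i)" "(\<integral>z. l i (fs i) z \<partial>D i) \<le> 1"
      using expected_loss_in_unit_interval[OF that] by blast+
    then have "\<bar>(\<integral>z. l i (fs i) z \<partial>D i) - l i (fs i) (S i j)\<bar> \<le> 1"
      using l_nonneg[OF that, of "fs i" "S i j"] l_le_1[OF that, of "fs i" "S i j"]
      unfolding abs_le_iff by (intro conjI) linarith+
    then show ?thesis
      by (simp add: divide_right_mono)
  qed
  have "\<bar>risk_gap fs S\<bar> \<le> (\<Sum>i<n. \<Sum>j<m i. 1 / (real n * real (m i)))"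
    unfolding risk_gap_def
    by (rule order.trans[OF sum_abs sum_mono], rule order.trans[OF sum_abs sum_mono]) (auto intro: term_le)
  also have "\<dots> = (\<Sum>i<n. 1 / real n)"
    using m_pos by (intro sum.cong) (auto simp: Suc_le_eq)
  also have "\<dots> = 1"
    using n_pos by simp
  finally show ?thesis .
qed

lemma measurable_sample_component:
  assumes "i < n" and "j < m i"
  shows "(\<lambda>S. S i j) \<in> measurable samples Z"
proof -
  have "(\<lambda>S. S i j) \<in> measurable samples (D i)"
    unfolding sample_measure_def using assms
    by (intro measurable_compose[OF measurable_component_singleton[of i] measurable_component_singleton])
      simp_all
  then show ?thesis
    using measurable_cong_sets[OF refl sets_D[OF assms(1)]] by blast
qed

lemma measurable_expected_loss:
  assumes "i < n"
  shows "(\<lambda>fs. \<integral>z. l i (fs i) z \<partial>D i) \<in> borel_measurable (PiM {..<n} (\<lambda>_. F))"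
proof -
  interpret Di: prob_space "D i"
    using prob_space_D[OF assms] .
  have "i \<in> {..<n}"
    using assms by simp
  then have "(\<lambda>x. (fst x i, snd x)) \<in> measurable (PiM {..<n} (\<lambda>_. F) \<Otimes>\<^sub>M D i) (F \<Otimes>\<^sub>M D i)"
    by measurable
  from measurable_compose[OF this measurable_loss_pair[OF assms refl]]
  have "(\<lambda>(fs, z). l i (fs i) z) \<in> borel_measurable (PiM {..<n} (\<lambda>_. F) \<Otimes>\<^sub>M D i)"
    by (simp add: case_prod_beta')
  then show ?thesis
    by (rule Di.borel_measurable_lebesgue_integral)
qed

lemma measurable_risk_gap:
  "(\<lambda>(S, fs). risk_gap fs S) \<in> borel_measurable (samples \<Otimes>\<^sub>M PiM {..<n} (\<lambda>_. F))"
proof -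
  let ?SF = "samples \<Otimes>\<^sub>M PiM {..<n} (\<lambda>_. F)"
  have loss: "(\<lambda>x. l i (snd x i) (fst x i j)) \<in> borel_measurable ?SF" if "i < n" "j < m i" for i j
  proof -
    have "i \<in> {..<n}"
      using that by simp
    then have "(\<lambda>x. (snd x i, fst x i j)) \<in> measurable ?SF (F \<Otimes>\<^sub>M Z)"
      using measurable_sample_component[OF that] by measurable
    from measurable_compose[OF this measurable_l[OF that(1)]] show ?thesis
      by simp
  qed
  have expected: "(\<lambda>x. \<integral>z. l i (snd x i) z \<partial>D i) \<in> borel_measurable ?SF" if "i < n" for i
    by (rule measurable_compose[OF measurable_snd measurable_expected_loss[OF that]])
  show ?thesis
    unfolding risk_gap_def case_prod_beta'
    by (intro borel_measurable_sum borel_measurable_divide borel_measurable_diff expected loss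
        borel_measurable_const) simp_all
qed

lemma nn_integral_exp_risk_gap_le:
  assumes fs: "\<And>i. i < n \<Longrightarrow> fs i \<in> space F" and t: "0 < t"
  shows "(\<integral>\<^sup>+S. ennreal (exp (t * risk_gap fs S)) \<partial>samples)
    \<le> ennreal (exp (t\<^sup>2 / (8 * harmonic_m * real n)))"
proof -
  define c where "c i = t / (real n * real (m i))" for i
  define X where "X i z = - l i (fs i) z" for i z
  define g where "g i z = ennreal (exp (c i * (X i z - (\<integral>z. X i z \<partial>D i))))" for i z
  have m_real: "1 \<le> real (m i)" if "i < n" for i
    using m_pos[OF that] by simp
  have X_meas: "X i \<in> borel_measurable (D i)" if "i < n" for i
    unfolding X_def using measurable_loss_sample[OF that fs[OF that]] by measurable
  have "ennreal (exp (t * risk_gap fs S)) = (\<Prod>i<n. \<Prod>j<m i. g i (S i j))" for S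
  proof -
    have "t * risk_gap fs S = (\<Sum>i<n. \<Sum>j<m i. c i * (X i (S i j) - (\<integral>z. X i z \<partial>D i)))"
      unfolding risk_gap_def c_def X_def by (simp add: sum_distrib_left algebra_simps diff_divide_distrib)
    then show ?thesis
      by (simp add: g_def exp_sum prod_ennreal prod_nonneg)
  qed
  then have "(\<integral>\<^sup>+S. ennreal (exp (t * risk_gap fs S)) \<partial>samples)
      = (\<Prod>i<n. \<integral>\<^sup>+s. (\<Prod>j<m i. g i (s j)) \<partial>PiM {..<m i} (\<lambda>_. D i))"
    unfolding sample_measure_def
  proof (simp only:, intro nn_integral_PiM_prod)
    fix i assume "i \<in> {..<n}"
    then have i: "i < n" by simp
    show "sigma_finite_measure (PiM {..<m i} (\<lambda>_. D i))"
      using prob_space_D[OF i] by (intro prob_space_imp_sigma_finite prob_space_PiM)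
    have "(\<lambda>s. g i (s j)) \<in> borel_measurable (PiM {..<m i} (\<lambda>_. D i))" if "j < m i" for j
    proof -
      note [measurable] = X_meas[OF i]
      have "j \<in> {..<m i}"
        using that by simp
      then show ?thesis
        unfolding g_def by measurable
    qed
    then show "(\<lambda>s. \<Prod>j<m i. g i (s j)) \<in> borel_measurable (PiM {..<m i} (\<lambda>_. D i))"
      by (intro borel_measurable_prod_ennreal) simp
  qed simp
  also have "\<dots> \<le> (\<Prod>i<n. ennreal (exp (real (m i) * (c i)\<^sup>2 / 8)))"
  proof (intro prod_mono_ennreal)
    fix i assume "i \<in> {..<n}"
    then have i: "i < n" by simp
    have "0 < c i"
      unfolding c_def using t n_pos m_real[OF i] by simp
    moreover have "-1 \<le> X i z \<and> X i z \<le> 0" for z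
      using l_nonneg[OF i] l_le_1[OF i] by (simp add: X_def)
    ultimately show "(\<integral>\<^sup>+s. (\<Prod>j<m i. g i (s j)) \<partial>PiM {..<m i} (\<lambda>_. D i))
        \<le> ennreal (exp (real (m i) * (c i)\<^sup>2 / 8))"
      using Hoeffding_mgf_PiM[OF prob_space_D[OF i] X_meas[OF i], of "-1" 0 "c i" "m i"]
      unfolding g_def by simp
  qed
  also have "\<dots> = ennreal (exp (\<Sum>i<n. t\<^sup>2 / (8 * (real n)\<^sup>2) * (1 / real (m i))))"
  proof -
    have "real (m i) * (c i)\<^sup>2 / 8 = t\<^sup>2 / (8 * (real n)\<^sup>2) * (1 / real (m i))"
      if "i < n" for i
      using m_real[OF that] n_pos by (simp add: c_def power2_eq_square field_simps)
    then show ?thesis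
      by (simp add: prod_ennreal exp_sum mult_ac)
  qed
  also have "(\<Sum>i<n. t\<^sup>2 / (8 * (real n)\<^sup>2) * (1 / real (m i)))
      = t\<^sup>2 / (8 * (real n)\<^sup>2) * (\<Sum>i<n. 1 / real (m i))"
    by (rule sum_distrib_left[symmetric])
  also have "\<dots> = t\<^sup>2 / (8 * harmonic_m * real n)"
    unfolding harmonic_m_def using sum_inverse_m_pos n_pos by (simp add: field_simps power2_eq_square)
  finally show ?thesis .
qed

lemma integral_expected_loss_eq_true_risk:
  assumes i: "i < n" and "prob_space Q" and sQ: "sets Q = sets F"
  shows "(\<integral>f. (\<integral>z. l i f z \<partial>D i) \<partial>Q) = true_risk (D i) (l i) Q"
proof -
  interpret Di: prob_space "D i"
    using prob_space_D[OF i] .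
  interpret Q: prob_space Q by fact
  interpret pair_sigma_finite Q "D i" ..
  interpret QD: prob_space "Q \<Otimes>\<^sub>M D i"
    by (intro prob_space_pair Q.prob_space_axioms Di.prob_space_axioms)
  have "integrable (Q \<Otimes>\<^sub>M D i) (case_prod (l i))"
  proof (rule QD.integrable_const_bound[where B=1])
    show "AE x in Q \<Otimes>\<^sub>M D i. norm (case_prod (l i) x) \<le> 1"
      using l_nonneg[OF i] l_le_1[OF i] by (intro AE_I2) (simp add: case_prod_beta abs_le_iff)
  qed (rule measurable_loss_pair[OF i sQ])
  from Fubini_integral[OF this] show ?thesis
    unfolding true_risk_def gibbs_loss_def by simp
qed

lemma sum_gap_terms_eq:
  fixes a :: real and b :: "nat \<Rightarrow> real"
  assumes "0 < k"
  shows "(\<Sum>j<k. (a - b j) / (real n * real k)) = a / real n - ((\<Sum>j<k. b j) / real k) / real n"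
  using assms by (simp add: sum_subtractf sum_divide_distrib[symmetric] diff_divide_distrib field_simps)

lemma integral_risk_gap_hyper_post_joint:
  assumes HQ: "prob_space HQ" and Q: "\<And>i. i < n \<Longrightarrow> prob_space (Q i) \<and> sets (Q i) = sets F"
    and S: "S \<in> space samples"
  shows "(\<integral>x. risk_gap (snd x) S \<partial>hyper_post_joint n HQ Q)
    = (1 / real n) * (\<Sum>i<n. true_risk (D i) (l i) (Q i))
      - (1 / real n) * (\<Sum>i<n. emp_risk (m i) (l i) (Q i) (S i))"
proof -
  let ?QQ = "HQ \<Otimes>\<^sub>M PiM {..<n} Q"
  define R where "R i f = (\<integral>z. l i f z \<partial>D i)" for i f
  have Qp: "\<And>i. i \<in> {..<n} \<Longrightarrow> prob_space (Q i)"
    using Q by simp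
  have R_bound: "\<bar>R i f\<bar> \<le> 1" if "i < n" for i f
    using expected_loss_in_unit_interval[OF that, of f] by (simp add: R_def)
  have l_bound: "\<bar>l i f z\<bar> \<le> 1" if "i < n" for i f z
    using l_nonneg[OF that] l_le_1[OF that] by (simp add: abs_le_iff)
  have R_meas: "R i \<in> borel_measurable (Q i)" if i: "i < n" for i
  proof -
    interpret Di: prob_space "D i"
      using prob_space_D[OF i] .
    show ?thesis
      unfolding R_def using measurable_loss_pair[OF i] Q[OF i]
      by (intro Di.borel_measurable_lebesgue_integral) (simp add: case_prod_beta')
  qed
  have l_meas: "(\<lambda>f. l i f (S i j)) \<in> borel_measurable (Q i)" if "i < n" "j < m i" for i j
    using Q[OF that(1)] sample_in_space[OF S that] by (intro measurable_loss_predictor[OF that(1)]) simp_all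
  have R_int: "integrable ?QQ (\<lambda>x. R i (snd x i))"
    and R_eq: "(\<integral>x. R i (snd x i) \<partial>?QQ) = true_risk (D i) (l i) (Q i)" if "i < n" for i
    using integrable_pair_PiM_component[where f="R i" and i=i and M=Q and I="{..<n}" and B=1, OF HQ Qp _ R_meas[OF that] R_bound[OF that]]
      integral_pair_PiM_component[where f="R i" and i=i and M=Q and I="{..<n}" and B=1, OF HQ Qp _ R_meas[OF that] R_bound[OF that]]
      integral_expected_loss_eq_true_risk[OF that] Q[OF that] that
    by (simp_all add: R_def)
  have l_int: "integrable ?QQ (\<lambda>x. l i (snd x i) (S i j))"
    and l_eq: "(\<integral>x. l i (snd x i) (S i j) \<partial>?QQ) = gibbs_loss (l i) (Q i) (S i j)"
    if "i < n" "j < m i" for i j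
    using integrable_pair_PiM_component[where f="\<lambda>f. l i f (S i j)" and i=i and M=Q and I="{..<n}" and B=1, OF HQ Qp _ l_meas[OF that] l_bound[OF that(1)]]
      integral_pair_PiM_component[where f="\<lambda>f. l i f (S i j)" and i=i and M=Q and I="{..<n}" and B=1, OF HQ Qp _ l_meas[OF that] l_bound[OF that(1)]] that
    by (simp_all add: gibbs_loss_def)
  have "(\<integral>x. risk_gap (snd x) S \<partial>hyper_post_joint n HQ Q)
      = (\<integral>x. (\<Sum>i<n. \<Sum>j<m i. (R i (snd x i) - l i (snd x i) (S i j)) / (real n * real (m i))) \<partial>?QQ)"
    unfolding hyper_post_joint_def risk_gap_def R_def ..
  also have "\<dots> = (\<Sum>i<n. \<Sum>j<m i.
      (\<integral>x. (R i (snd x i) - l i (snd x i) (S i j)) / (real n * real (m i)) \<partial>?QQ))"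
  proof -
    have int: "integrable ?QQ (\<lambda>x. (R i (snd x i) - l i (snd x i) (S i j)) / (real n * real (m i)))"
      if "i \<in> {..<n}" "j \<in> {..<m i}" for i j
      using R_int l_int that by simp
    have "(\<integral>x. (\<Sum>i<n. \<Sum>j<m i. (R i (snd x i) - l i (snd x i) (S i j)) / (real n * real (m i))) \<partial>?QQ)
        = (\<Sum>i<n. \<integral>x. (\<Sum>j<m i. (R i (snd x i) - l i (snd x i) (S i j)) / (real n * real (m i))) \<partial>?QQ)"
      by (rule Bochner_Integration.integral_sum) (rule Bochner_Integration.integrable_sum, rule int)
    also have "\<dots> = (\<Sum>i<n. \<Sum>j<m i.
        (\<integral>x. (R i (snd x i) - l i (snd x i) (S i j)) / (real n * real (m i)) \<partial>?QQ))"
      by (intro sum.cong refl Bochner_Integration.integral_sum int)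
    finally show ?thesis .
  qed
  also have "\<dots> = (\<Sum>i<n. \<Sum>j<m i. (true_risk (D i) (l i) (Q i) - gibbs_loss (l i) (Q i) (S i j))
      / (real n * real (m i)))"
    using R_int l_int R_eq l_eq by (intro sum.cong refl) simp
  also have "\<dots> = (\<Sum>i<n. true_risk (D i) (l i) (Q i) / real n - emp_risk (m i) (l i) (Q i) (S i) / real n)"
    using m_pos by (intro sum.cong refl) (simp add: sum_gap_terms_eq emp_risk_def Suc_le_eq)
  also have "\<dots> = (1 / real n) * (\<Sum>i<n. true_risk (D i) (l i) (Q i))
      - (1 / real n) * (\<Sum>i<n. emp_risk (m i) (l i) (Q i) (S i))"
    by (simp add: sum_subtractf sum_divide_distrib[symmetric])
  finally show ?thesis .
qed

lemma measurable_risk_gap_hyper_prior: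
  assumes "prob_space HP"
  shows "(\<lambda>p. risk_gap (snd (snd p)) (fst p)) \<in> borel_measurable (samples \<Otimes>\<^sub>M hyper_prior_joint n F HP)"
proof -
  have "(\<lambda>p. (fst p, snd (snd p)))
      \<in> measurable (samples \<Otimes>\<^sub>M (prob_algebra F \<Otimes>\<^sub>M PiM {..<n} (\<lambda>_. F))) (samples \<Otimes>\<^sub>M PiM {..<n} (\<lambda>_. F))"
    by measurable
  from measurable_compose[OF this measurable_risk_gap] show ?thesis
    by (simp add: measurable_cong_sets[OF sets_pair_measure_cong[OF refl sets_hyper_prior_joint[OF assms]] refl])
qed

lemma hyper_prior_joint_predictor_in_space:
  assumes "prob_space HP" and "x \<in> space (hyper_prior_joint n F HP)" and "i < n"
  shows "snd x i \<in> space F"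
  using assms(2,3) sets_eq_imp_space_eq[OF sets_hyper_prior_joint[OF assms(1)]]
  by (auto simp: space_pair_measure space_PiM PiE_iff)

definition good_sample :: "'f measure measure \<Rightarrow> real \<Rightarrow> (nat \<Rightarrow> nat \<Rightarrow> 'z) \<Rightarrow> bool" where
  "good_sample HP \<delta> S \<longleftrightarrow>
    (\<forall>k. 1 \<le> k \<longrightarrow> k \<le> nat \<lceil>2 * (harmonic_m * real n)\<rceil> \<longrightarrow>
        (\<integral>\<^sup>+x. ennreal (exp (sqrt (8 * (harmonic_m * real n) * real k) * risk_gap (snd x) S))
          \<partial>hyper_prior_joint n F HP)
        \<le> ennreal (exp (real k) * real (nat \<lceil>2 * (harmonic_m * real n)\<rceil>) / \<delta>))"

lemma good_samples_event:
  assumes HP: "prob_space HP" and \<delta>: "0 < \<delta>"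
  shows "\<exists>E \<in> sets samples. 1 - \<delta> \<le> measure samples E \<and> (\<forall>S \<in> E. good_sample HP \<delta> S)"
proof -
  interpret samples: prob_space samples
    by (rule prob_space_samples)
  let ?N = "harmonic_m * real n" and ?PP = "hyper_prior_joint n F HP"
  let ?r = "nat \<lceil>2 * ?N\<rceil>"
  define \<Lambda> where "\<Lambda> k S = (\<integral>\<^sup>+x. ennreal (exp (sqrt (8 * ?N * real k) * risk_gap (snd x) S)) \<partial>?PP)" for k S
  define bad where "bad k = {S \<in> space samples. ennreal (exp (real k) / (\<delta> / ?r)) < \<Lambda> k S}" for k
  have N: "1 \<le> ?N"
    by (rule one_le_harmonic_m_n)
  then have r_pos: "0 < real ?r"
    by simp
  have bad: "bad k \<in> samples.events \<and> samples.prob (bad k) \<le> \<delta> / ?r" if "1 \<le> k" for k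
  proof -
    let ?t = "sqrt (8 * ?N * real k)"
    have t_pos: "0 < ?t"
      using N that by simp
    have "?t\<^sup>2 / (8 * harmonic_m * real n) = real k"
      using N n_pos one_le_harmonic_m by (simp add: field_simps)
    then have mgf: "(\<integral>\<^sup>+S. ennreal (exp (?t * risk_gap (snd x) S)) \<partial>samples) \<le> ennreal (exp (real k))"
      if "x \<in> space ?PP" for x
      using nn_integral_exp_risk_gap_le[OF hyper_prior_joint_predictor_in_space[OF HP that] t_pos] by simp
    have "(\<lambda>p. ?t * risk_gap (snd (snd p)) (fst p)) \<in> borel_measurable (samples \<Otimes>\<^sub>M ?PP)"
      by (intro borel_measurable_times borel_measurable_const measurable_risk_gap_hyper_prior[OF HP])
    then have meas: "(\<lambda>(S, x). ?t * risk_gap (snd x) S) \<in> borel_measurable (samples \<Otimes>\<^sub>M ?PP)"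
      by (simp add: case_prod_beta')
    have "0 < \<delta> / ?r"
      using \<delta> r_pos by simp
    from samples.prob_nn_integral_exp_gt_le[OF finite_measure_hyper_prior_joint[OF HP]
        emeasure_hyper_prior_joint_le_1[OF HP] meas mgf exp_gt_zero this]
    show ?thesis
      unfolding bad_def \<Lambda>_def by blast
  qed
  define E where "E = space samples - (\<Union>k\<in>{1..?r}. bad k)"
  show ?thesis
    unfolding good_sample_def \<Lambda>_def[symmetric]
  proof (intro bexI conjI ballI allI impI)
    show "E \<in> sets samples"
      unfolding E_def using bad by (intro sets.Diff sets.top sets.finite_UN) auto
    have "1 - (\<Sum>k\<in>{1..?r}. samples.prob (bad k)) \<le> samples.prob E"
      unfolding E_def using bad by (intro samples.prob_Diff_UN_ge) auto
    moreover have "(\<Sum>k\<in>{1..?r}. samples.prob (bad k)) \<le> (\<Sum>k\<in>{1..?r}. \<delta> / ?r)"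
      using bad by (intro sum_mono) auto
    ultimately show "1 - \<delta> \<le> samples.prob E"
      using r_pos by simp
    fix S k assume "S \<in> E" "1 \<le> k" "k \<le> ?r"
    then have "\<not> ennreal (exp (real k) / (\<delta> / ?r)) < \<Lambda> k S"
      unfolding E_def bad_def by auto
    then show "\<Lambda> k S \<le> ennreal (exp (real k) * ?r / \<delta>)"
      by (simp add: not_less)
  qed
qed

lemma PAC_Bayes_bound_of_good_sample:
  assumes HP: "prob_space HP" and \<delta>: "0 < \<delta>" "\<delta> < 1" and S: "S \<in> space samples"
    and good: "good_sample HP \<delta> S"
    and HQ: "prob_space HQ" and Q: "\<And>i. i < n \<Longrightarrow> prob_space (Q i) \<and> sets (Q i) = sets F"
  shows "ereal ((1 / real n) * (\<Sum>i<n. true_risk (D i) (l i) (Q i)))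
    \<le> ereal ((1 / real n) * (\<Sum>i<n. emp_risk (m i) (l i) (Q i) (S i)))
      + sqrt_ext ((kl_div (hyper_post_joint n HQ Q) (hyper_prior_joint n F HP)
          + ereal (ln (4 * harmonic_m * real n / \<delta>)) + 1) / ereal (2 * harmonic_m * real n))"
proof -
  let ?QQ = "hyper_post_joint n HQ Q" and ?PP = "hyper_prior_joint n F HP"
  let ?N = "harmonic_m * real n"
  have N: "1 \<le> ?N"
    by (rule one_le_harmonic_m_n)
  show ?thesis
  proof (cases "sets ?QQ = sets ?PP \<and> absolutely_continuous ?PP ?QQ
      \<and> integrable ?QQ (entropy_density (exp 1) ?PP ?QQ)")
    case False
    then have "kl_div ?QQ ?PP = \<infinity>"
      by (simp add: kl_div_def)
    moreover have "0 < 2 * harmonic_m * real n"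
      using N by linarith
    moreover have "sqrt_ext \<infinity> = \<infinity>"
      using sqrt_ext.simps(2) by simp
    ultimately show ?thesis
      by simp
  next
    case True
    interpret prior: finite_measure ?PP
      by (rule finite_measure_hyper_prior_joint[OF HP])
    have QQ: "prob_space ?QQ"
      unfolding hyper_post_joint_def using HQ Q by (intro prob_space_pair prob_space_PiM) auto
    have gap_meas: "(\<lambda>x. risk_gap (snd x) S) \<in> borel_measurable ?PP"
      using measurable_Pair2[OF measurable_risk_gap_hyper_prior[OF HP] S] by simp
    have "(\<integral>x. risk_gap (snd x) S \<partial>?QQ)
        \<le> sqrt ((KL_divergence (exp 1) ?PP ?QQ + ln (4 * ?N / \<delta>) + 1) / (2 * ?N))"
      using True
      by (intro prior.PAC_Bayes_grid_bound[OF N \<delta> emeasure_hyper_prior_joint_le_1[OF HP] _ _ QQ _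
            gap_meas abs_risk_gap_le_1 good[unfolded good_sample_def, rule_format]]) simp_all
    moreover have "kl_div ?QQ ?PP = ereal (KL_divergence (exp 1) ?PP ?QQ)"
      using True by (simp add: kl_div_def)
    moreover have "(ereal K + ereal (ln (4 * harmonic_m * real n / \<delta>)) + 1) / ereal (2 * harmonic_m * real n)
        = ereal ((K + ln (4 * ?N / \<delta>) + 1) / (2 * ?N))" for K
      using one_le_harmonic_m n_pos by (simp add: mult.assoc one_ereal_def)
    ultimately show ?thesis
      using integral_risk_gap_hyper_post_joint[OF HQ Q S] by simp
  qed
qed

lemma PAC_Bayes_multitask:
  assumes HP: "prob_space HP" and \<delta>: "0 < \<delta>" "\<delta> < 1"
  shows "\<exists>E \<in> sets samples. 1 - \<delta> \<le> measure samples E \<and>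
    (\<forall>S \<in> E. \<forall>HQ Q. prob_space HQ \<and> (\<forall>i<n. prob_space (Q i) \<and> sets (Q i) = sets F) \<longrightarrow>
      ereal ((1 / real n) * (\<Sum>i<n. true_risk (D i) (l i) (Q i)))
        \<le> ereal ((1 / real n) * (\<Sum>i<n. emp_risk (m i) (l i) (Q i) (S i)))
          + sqrt_ext ((kl_div (hyper_post_joint n HQ Q) (hyper_prior_joint n F HP)
              + ereal (ln (4 * harmonic_m * real n / \<delta>)) + 1) / ereal (2 * harmonic_m * real n)))"
proof -
  obtain E where E: "E \<in> sets samples" "1 - \<delta> \<le> measure samples E"
    and good: "\<forall>S \<in> E. good_sample HP \<delta> S"
    using good_samples_event[OF HP \<delta>(1)] by blast
  have "S \<in> space samples" if "S \<in> E" for S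
    using that sets.sets_into_space[OF E(1)] by blast
  with E good show ?thesis
    by (intro bexI[OF _ E(1)] conjI ballI allI impI PAC_Bayes_bound_of_good_sample[OF HP \<delta>]) blast+
qed

end

theorem theorem3:
  fixes n :: nat and m :: "nat \<Rightarrow> nat"
    and F :: "'f measure" and Z :: "'z measure"
    and D :: "nat \<Rightarrow> 'z measure" and l :: "nat \<Rightarrow> 'f \<Rightarrow> 'z \<Rightarrow> real"
    and HP :: "'f measure measure" and \<delta> :: real
  assumes n_pos: "n > 0"
    and m_pos: "\<forall>i<n. m i \<ge> 1"
    and D_prob: "\<forall>i<n. prob_space (D i) \<and> sets (D i) = sets Z"
    and l_meas: "\<forall>i<n. (\<lambda>(f, z). l i f z) \<in> borel_measurable (F \<Otimes>\<^sub>M Z)"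
    and l_range: "\<forall>i<n. \<forall>f z. 0 \<le> l i f z \<and> l i f z \<le> 1"
    and HP_prob: "prob_space HP" "sets HP = sets (prob_algebra F)"
    and \<delta>_pos: "\<delta> > 0"
  shows "\<exists>E \<in> sets (sample_measure n m D).
     measure (sample_measure n m D) E \<ge> 1 - \<delta> \<and>
     (\<forall>S \<in> E. \<forall>HQ Q.
        prob_space HQ \<and> sets HQ = sets (prob_algebra F) \<and>
        (\<forall>i<n. prob_space (Q i) \<and> sets (Q i) = sets F) \<longrightarrow>
        (let mh = real n / (\<Sum>i<n. 1 / real (m i));
             KL = kl_div (hyper_post_joint n HQ Q) (hyper_prior_joint n F HP)
         in ereal ((1 / real n) * (\<Sum>i<n. true_risk (D i) (l i) (Q i)))
            \<le> ereal ((1 / real n) * (\<Sum>i<n. emp_risk (m i) (l i) (Q i) (S i)))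
               + sqrt_ext ((KL + ereal (ln (4 * mh * real n / \<delta>)) + 1) / ereal (2 * mh * real n))))"
proof (cases "\<delta> < 1")
  case False
  then show ?thesis
    by (intro bexI[of _ "{}"]) auto
next
  case True
  interpret multitask_learning n m F Z D l
    by (rule multitask_learning.intro) (use n_pos m_pos D_prob l_meas l_range in simp_all)
  from PAC_Bayes_multitask[OF HP_prob(1) \<delta>_pos True] show ?thesis
    unfolding Let_def harmonic_m_def by blast
qed

end
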